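(* Let $F$, $H$, $K$ and $R$ be fixed monic polynomials in $\mathbb{F}_q[T]$ with $F\mid R$, and let $z$ be a non-negative integer with $z<\deg(R)$. Then \[ \sum_{\substack{A,B\in\mathbb{A}^+\\ \deg(AB)=z\\ AH\equiv BK\ (\mathrm{mod}\ F)\\ AH\neq BK\\ (ABHK,R)=1}}\frac{1}{|AB|^{\frac{1}{2}}}\ll\frac{q^{\frac{z}{2}}(z+1)|HK|}{|F|}. \]
   Context: $q$ is a power of an odd prime, $\mathbb{A}=\mathbb{F}_q[T]$, $\mathbb{A}^+$ is the set of monic polynomials in $\mathbb{A}$, and $|f|=q^{\deg(f)}$ for $f\in\mathbb{A}$. *)

theory Defs
  imports "HOL-Analysis.Analysis" "HOL-Computational_Algebra.Polynomial_Factorial"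
begin

definition monic :: "'a::zero_neq_one poly \<Rightarrow> bool" where
  "monic f \<longleftrightarrow> lead_coeff f = 1"

definition pabs :: "'a::{finite,field} poly \<Rightarrow> real" where
  "pabs f = real CARD('a) ^ degree f"

definition pair_set :: "'a::{finite,field} poly \<Rightarrow> 'a poly \<Rightarrow> 'a poly \<Rightarrow> 'a poly \<Rightarrow> nat
    \<Rightarrow> ('a poly \<times> 'a poly) set" where
  "pair_set F H K R z = {(A, B). monic A \<and> monic B \<and> degree (A * B) = z \<and>
      (A * H) mod F = (B * K) mod F \<and> A * H \<noteq> B * K \<and> coprime (A * B * H * K) R}"

end

theory Submission
  imports Defs
begin

(* Every summand equals q^(-z/2), so the claim is a bound on the number of pairs (A, B).
   Split them by a = deg A, b = z - a. As (H, R) = 1 and F | R, H is invertible modulo F, so for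
   fixed B the congruence AH = BK (mod F) determines A modulo F: the pair is recovered from
   (B, A div F), which leaves at most q^(b+1) q^(a - deg F + 1) possibilities. Since F divides
   the nonzero AH - BK, deg F <= max (a + deg H) (b + deg K), and by the symmetry
   (A, H) <-> (B, K) the maximum may be taken to be a + deg H; hence each a contributes at most
   q^(z + 2) |HK| / |F| pairs, and the z + 1 values of a give the bound with C = q^2. *)

lemma inj_on_coeffs_degree_le:
  "inj_on (\<lambda>p. restrict (coeff p) {..n}) {p :: 'a::zero poly. degree p \<le> n}"
proof (rule inj_onI, rule poly_eqI)
  fix p q :: "'a poly" and i
  assume deg: "p \<in> {p. degree p \<le> n}" "q \<in> {p. degree p \<le> n}"
    and eq: "restrict (coeff p) {..n} = restrict (coeff q) {..n}"
  show "coeff p i = coeff q i"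
  proof (cases "i \<le> n")
    case True
    then show ?thesis using fun_cong[OF eq, of i] by simp
  next
    case False
    then show ?thesis using deg by (simp add: coeff_eq_0)
  qed
qed

lemma
  shows finite_degree_le: "finite {p :: 'a::{finite,zero} poly. degree p \<le> n}"
    and card_degree_le: "card {p :: 'a::{finite,zero} poly. degree p \<le> n} \<le> CARD('a) ^ Suc n"
proof -
  let ?coeffs = "\<lambda>p :: 'a poly. restrict (coeff p) {..n}"
  have into: "?coeffs ` {p. degree p \<le> n} \<subseteq> (\<Pi>\<^sub>E i\<in>{..n}. UNIV)"
    by (intro image_subsetI) (simp add: restrict_PiE_iff)
  have fin: "finite (\<Pi>\<^sub>E i\<in>{..n}. (UNIV :: 'a set))" by (simp add: finite_PiE)
  show "finite {p :: 'a poly. degree p \<le> n}"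
    using inj_on_finite[OF inj_on_coeffs_degree_le into fin] .
  show "card {p :: 'a poly. degree p \<le> n} \<le> CARD('a) ^ Suc n"
    using card_inj_on_le[OF inj_on_coeffs_degree_le into fin] by (simp add: card_PiE)
qed

lemma degree_div_le:
  fixes A F :: "'a::field poly"
  shows "degree (A div F) \<le> degree A - degree F"
proof (cases "F = 0 \<or> A div F = 0")
  case False
  then have deg_mult: "degree (A div F * F) = degree (A div F) + degree F"
    by (simp add: degree_mult_eq)
  have "degree A = degree (A div F * F)"
  proof (cases "A mod F = 0")
    case False
    then have "degree (A mod F) < degree (A div F * F)"
      using \<open>\<not> (F = 0 \<or> A div F = 0)\<close> deg_mult degree_mod_less'[of F A] by simp
    then show ?thesis
      using degree_add_eq_left[of "A mod F" "A div F * F"] by simp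
  qed (metis add_0_right div_mult_mod_eq)
  then show ?thesis using deg_mult by simp
qed auto

text \<open>The library's \<open>coprime_dvd_mult_left_iff\<close> needs a \<open>semiring_gcd\<close> instance, which
  \<open>'a poly\<close> has only for coefficient types with a gcd structure, not for an arbitrary field.\<close>
lemma coprime_dvd_mult_left_euclidean:
  fixes a b c :: "'a::euclidean_ring"
  assumes "coprime a c" and "a dvd b * c"
  shows "a dvd b"
proof -
  define I where "I = {u * a + v * c | u v. True}"
  have I_diff: "x - w * y \<in> I" if x_y: "x \<in> I" "y \<in> I" for x y w
  proof -
    obtain u v u' v' where "x = u * a + v * c" "y = u' * a + v' * c"
      using x_y unfolding I_def by blast
    then have "x - w * y = (u - w * u') * a + (v - w * v') * c" by (simp add: algebra_simps)
    then show ?thesis by (auto simp: I_def)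
  qed
  have "a \<in> I" "c \<in> I" by (auto simp: I_def intro: exI[of _ 1] exI[of _ 0])
  moreover have "a \<noteq> 0 \<or> c \<noteq> 0" using assms(1) by auto
  ultimately obtain e where "e \<in> I" "e \<noteq> 0" by blast
  then obtain d where d: "d \<in> I" "d \<noteq> 0"
    and d_min: "\<And>y. y \<in> I \<Longrightarrow> y \<noteq> 0 \<Longrightarrow> euclidean_size d \<le> euclidean_size y"
    using ex_has_least_nat[of "\<lambda>y. y \<in> I \<and> y \<noteq> 0" e euclidean_size] by blast
  \<comment> \<open>an element of least size in the ideal (a, c) divides the whole ideal\<close>
  have d_dvd: "d dvd y" if "y \<in> I" for y
  proof (rule ccontr)
    assume "\<not> d dvd y"
    then have "y mod d \<noteq> 0" by (simp add: mod_eq_0_iff_dvd)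
    moreover have "y mod d \<in> I"
      using I_diff[OF that d(1), of "y div d"] by (simp add: minus_div_mult_eq_mod)
    ultimately have "euclidean_size d \<le> euclidean_size (y mod d)" by (rule d_min[rotated])
    with mod_size_less[OF d(2), of y] show False by simp
  qed
  have "is_unit d"
    using assms(1) d_dvd \<open>a \<in> I\<close> \<open>c \<in> I\<close> by (blast intro: coprime_common_divisor)
  obtain u v where "d = u * a + v * c" using d(1) by (auto simp: I_def)
  then have "b * d = (b * u) * a + v * (b * c)" by (simp add: algebra_simps)
  then have "a dvd b * d" using assms(2) by simp
  with \<open>is_unit d\<close> show ?thesis by (simp add: dvd_mult_unit_iff)
qed

definition congruent_pairs :: "'a::field poly \<Rightarrow> 'a poly \<Rightarrow> 'a poly \<Rightarrow> nat \<Rightarrow> nat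
    \<Rightarrow> ('a poly \<times> 'a poly) set" where
  "congruent_pairs F H K a b = {(A, B). degree A \<le> a \<and> degree B \<le> b \<and>
      (A * H) mod F = (B * K) mod F \<and> A * H \<noteq> B * K}"

lemma card_congruent_pairs_swap:
  "card (congruent_pairs F K H b a) = card (congruent_pairs F H K a b)"
proof -
  have "congruent_pairs F K H b a = prod.swap ` congruent_pairs F H K a b"
    by (auto simp: congruent_pairs_def image_iff)
  then show ?thesis by (simp only: card_image[OF inj_swap])
qed

lemma finite_congruent_pairs:
  "finite (congruent_pairs F H K a (b :: nat) :: ('a::{finite,field} poly \<times> _) set)"
proof (rule finite_subset)
  show "congruent_pairs F H K a b \<subseteq> {A. degree A \<le> a} \<times> {B. degree B \<le> b}"
    by (auto simp: congruent_pairs_def)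
qed (simp add: finite_degree_le)

lemma degree_le_if_mem_congruent_pairs:
  assumes "(A, B) \<in> congruent_pairs F H K a b"
  shows "degree F \<le> max (a + degree H) (b + degree K)"
proof -
  have "F dvd A * H - B * K" and "A * H - B * K \<noteq> 0"
    using assms by (auto simp: congruent_pairs_def mod_eq_dvd_iff)
  then have "degree F \<le> degree (A * H - B * K)" by (rule dvd_imp_degree_le)
  also have "\<dots> \<le> max (degree (A * H)) (degree (B * K))" by (rule degree_diff_le_max)
  also have "\<dots> \<le> max (a + degree H) (b + degree K)"
    using assms degree_mult_le[of A H] degree_mult_le[of B K]
    by (auto simp: congruent_pairs_def)
  finally show ?thesis .
qed

lemma inj_on_congruent_pairs:
  assumes "coprime F H"
  shows "inj_on (\<lambda>(A, B). (B, A div F)) (congruent_pairs F H K a b)"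
proof (rule inj_onI, clarsimp)
  fix A A' B
  assume "(A, B) \<in> congruent_pairs F H K a b" "(A', B) \<in> congruent_pairs F H K a b"
    and div_eq: "A div F = A' div F"
  then have "(A * H) mod F = (A' * H) mod F" by (simp add: congruent_pairs_def)
  then have "F dvd (A - A') * H" by (simp add: mod_eq_dvd_iff left_diff_distrib)
  then have "F dvd A - A'" by (rule coprime_dvd_mult_left_euclidean[OF assms])
  then have "A mod F = A' mod F" by (simp add: mod_eq_dvd_iff)
  then show "A = A'" using div_eq by (metis div_mult_mod_eq)
qed

lemma card_congruent_pairs_le_of_degree_le:
  fixes F H K :: "'a::{finite,field} poly"
  assumes "coprime F H" and "b + degree K \<le> a + degree H"
  shows "card (congruent_pairs F H K a b) * CARD('a) ^ degree F \<le> CARD('a) ^ (a + b + degree H + 2)"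
proof (cases "congruent_pairs F H K a b = {}")
  case False
  then obtain A B where "(A, B) \<in> congruent_pairs F H K a b" by auto
  then have deg_F: "degree F \<le> a + degree H"
    using degree_le_if_mem_congruent_pairs assms(2) by fastforce
  let ?target = "{B :: 'a poly. degree B \<le> b} \<times> {Q :: 'a poly. degree Q \<le> a - degree F}"
  have "(\<lambda>(A, B). (B, A div F)) ` congruent_pairs F H K a b \<subseteq> ?target"
  proof clarsimp
    fix A B
    assume "(A, B) \<in> congruent_pairs F H K a b"
    then have "degree A \<le> a" "degree B \<le> b" by (auto simp: congruent_pairs_def)
    then show "degree B \<le> b \<and> degree (A div F) \<le> a - degree F"
      using degree_div_le[of A F] by linarith
  qed
  then have "card (congruent_pairs F H K a b) \<le> card ?target"
    by (rule card_inj_on_le[OF inj_on_congruent_pairs[OF assms(1)]])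
      (simp add: finite_degree_le)
  also have "\<dots> \<le> CARD('a) ^ Suc b * CARD('a) ^ Suc (a - degree F)"
    unfolding card_cartesian_product by (intro mult_le_mono card_degree_le)
  also have "\<dots> = CARD('a) ^ (Suc b + Suc (a - degree F))"
    by (simp only: power_add)
  finally have "card (congruent_pairs F H K a b) * CARD('a) ^ degree F
      \<le> CARD('a) ^ (Suc b + Suc (a - degree F)) * CARD('a) ^ degree F"
    by (rule mult_right_mono) simp
  also have "\<dots> = CARD('a) ^ (Suc b + Suc (a - degree F) + degree F)"
    by (simp only: power_add)
  also have "\<dots> \<le> CARD('a) ^ (a + b + degree H + 2)"
    using deg_F by (intro power_increasing) auto
  finally show ?thesis .
qed simp

lemma card_congruent_pairs_le:
  fixes F H K :: "'a::{finite,field} poly"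
  assumes "coprime F H" and "coprime F K"
  shows "card (congruent_pairs F H K a b) * CARD('a) ^ degree F
    \<le> CARD('a) ^ (a + b + degree H + degree K + 2)"
proof (cases "b + degree K \<le> a + degree H")
  case True
  have "card (congruent_pairs F H K a b) * CARD('a) ^ degree F \<le> CARD('a) ^ (a + b + degree H + 2)"
    using assms(1) True by (rule card_congruent_pairs_le_of_degree_le)
  also have "\<dots> \<le> CARD('a) ^ (a + b + degree H + degree K + 2)"
    by (intro power_increasing) auto
  finally show ?thesis .
next
  case False
  have "card (congruent_pairs F K H b a) * CARD('a) ^ degree F
      \<le> CARD('a) ^ (b + a + degree K + 2)"
    using assms(2) False by (intro card_congruent_pairs_le_of_degree_le) simp_all
  also have "\<dots> \<le> CARD('a) ^ (a + b + degree H + degree K + 2)"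
    by (intro power_increasing) auto
  finally show ?thesis by (simp only: card_congruent_pairs_swap)
qed

lemma pair_set_subset_congruent_pairs:
  "pair_set F H K R z \<subseteq> (\<Union>a\<le>z. congruent_pairs F H K a (z - a))"
proof clarify
  fix A B
  assume AB: "(A, B) \<in> pair_set F H K R z"
  then have "A \<noteq> 0" "B \<noteq> 0" by (auto simp: pair_set_def monic_def)
  with AB have "degree A + degree B = z" by (simp add: pair_set_def degree_mult_eq)
  with AB have "(A, B) \<in> congruent_pairs F H K (degree A) (z - degree A)"
    by (auto simp: pair_set_def congruent_pairs_def)
  with \<open>degree A + degree B = z\<close> show "(A, B) \<in> (\<Union>a\<le>z. congruent_pairs F H K a (z - a))"
    by auto
qed

lemma coprime_if_mem_pair_set:
  assumes "(A, B) \<in> pair_set F H K R z" and "F dvd R"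
  shows "coprime F H" and "coprime F K"
proof -
  have "coprime (A * B * H * K) R" using assms(1) by (simp add: pair_set_def)
  then have "coprime R (A * B * H * K)" by (simp add: coprime_commute)
  then show "coprime F H" and "coprime F K"
    using assms(2) by (auto elim: coprime_divisors[rotated 2])
qed

lemma card_pair_set_le:
  fixes F H K R :: "'a::{finite,field} poly"
  assumes "F dvd R"
  shows "card (pair_set F H K R z) * CARD('a) ^ degree F
    \<le> (z + 1) * CARD('a) ^ (z + degree H + degree K + 2)"
proof (cases "pair_set F H K R z = {}")
  case False
  then obtain A B where "(A, B) \<in> pair_set F H K R z" by auto
  with assms have coprime: "coprime F H" "coprime F K" by (auto intro: coprime_if_mem_pair_set)
  have "card (pair_set F H K R z) \<le> card (\<Union>a\<le>z. congruent_pairs F H K a (z - a))"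
    by (intro card_mono pair_set_subset_congruent_pairs) (simp add: finite_congruent_pairs)
  also have "\<dots> \<le> (\<Sum>a\<le>z. card (congruent_pairs F H K a (z - a)))"
    by (rule card_UN_le) simp
  finally have "card (pair_set F H K R z) * CARD('a) ^ degree F
      \<le> (\<Sum>a\<le>z. card (congruent_pairs F H K a (z - a)) * CARD('a) ^ degree F)"
    unfolding sum_distrib_right[symmetric] by (rule mult_right_mono) simp
  also have "\<dots> \<le> (\<Sum>a\<le>z. CARD('a) ^ (z + degree H + degree K + 2))"
  proof (rule sum_mono)
    fix a assume "a \<in> {..z}"
    then have "a + (z - a) + degree H + degree K + 2 = z + degree H + degree K + 2" by simp
    then show "card (congruent_pairs F H K a (z - a)) * CARD('a) ^ degree F
        \<le> CARD('a) ^ (z + degree H + degree K + 2)"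
      using card_congruent_pairs_le[OF coprime, of a "z - a"] by simp
  qed
  finally show ?thesis by simp
qed simp

lemma sum_pair_set_eq_card:
  fixes F H K R :: "'a::{finite,field} poly"
  shows "(\<Sum>(A, B)\<in>pair_set F H K R z. 1 / sqrt (pabs (A * B)))
    = card (pair_set F H K R z) / sqrt (real CARD('a) ^ z)"
proof -
  have "(\<Sum>(A, B)\<in>pair_set F H K R z. 1 / sqrt (pabs (A * B)))
      = (\<Sum>_\<in>pair_set F H K R z. 1 / sqrt (real CARD('a) ^ z))"
    by (rule sum.cong) (auto simp: pair_set_def pabs_def)
  then show ?thesis by simp
qed

theorem lemma3p4:
  assumes "odd (CARD('a::{finite,field}))"
  shows "\<exists>C>0. \<forall>(F::'a poly) H K R (z::nat).
           monic F \<and> monic H \<and> monic K \<and> monic R \<and> F dvd R \<and> z < degree R \<longrightarrow>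
           (\<Sum>(A, B)\<in>pair_set F H K R z. 1 / sqrt (pabs (A * B)))
             \<le> C * (sqrt (real CARD('a) ^ z) * real (z + 1) * pabs (H * K) / pabs F)"
proof (intro exI[of _ "real CARD('a) ^ 2"] conjI allI impI)
  show "0 < real CARD('a) ^ 2" by simp
  fix F H K R :: "'a poly" and z :: nat
  assume hyps: "monic F \<and> monic H \<and> monic K \<and> monic R \<and> F dvd R \<and> z < degree R"
  define q where "q = real CARD('a)"
  define s where "s = sqrt (q ^ z)"
  define M where "M = q ^ (degree H + degree K)"
  have "0 < q" by (simp add: q_def)
  then have "0 < s" "s * s = q ^ z" by (simp_all add: s_def)
  have "H \<noteq> 0" "K \<noteq> 0" using hyps by (auto simp: monic_def)
  then have pabs: "pabs (H * K) = M" "pabs F = q ^ degree F"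
    by (simp_all add: pabs_def q_def M_def degree_mult_eq)
  have "real (card (pair_set F H K R z)) * q ^ degree F
      \<le> real (z + 1) * q ^ (z + degree H + degree K + 2)"
    using card_pair_set_le[of F R H K z] hyps unfolding q_def
    by (metis of_nat_le_iff of_nat_mult of_nat_power)
  also have "\<dots> = q ^ 2 * (s * s) * real (z + 1) * M"
    by (simp add: \<open>s * s = q ^ z\<close> M_def power_add power2_eq_square)
  finally have "real (card (pair_set F H K R z)) / s \<le> q ^ 2 * (s * real (z + 1) * M / q ^ degree F)"
    using \<open>0 < s\<close> \<open>0 < q\<close> by (simp add: field_simps)
  then show "(\<Sum>(A, B)\<in>pair_set F H K R z. 1 / sqrt (pabs (A * B)))
      \<le> real CARD('a) ^ 2 * (sqrt (real CARD('a) ^ z) * real (z + 1) * pabs (H * K) / pabs F)"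
    unfolding sum_pair_set_eq_card pabs s_def q_def .
qed

end
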